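(* Let $F=\{1,2,3,5,8,\dots\}$ be the set of positive Fibonacci numbers. There exists a $4$-coloring of $\mathbb{N}$ admitting no monochromatic $4$-term $F$-diffsequence. In particular $F$ is not $4$-accessible, i.e. $\operatorname{doa}(F)\le 3$.
   Context: For $D\subseteq\mathbb{N}$, a $k$-term $D$-diffsequence is a sequence of integers $x_1,\dots,x_k$ with $x_{i+1}-x_i\in D$ for all $1\le i\le k-1$. $D$ is $r$-accessible if every $r$-coloring $\chi:\mathbb{N}\to\{1,\dots,r\}$ admits monochromatic $k$-term $D$-diffsequences for every $k\ge1$; $\operatorname{doa}(D)$ is the greatest $r$ for which $D$ is $r$-accessible. *)

theory Defs
  imports Main "HOL-Number_Theory.Fib"
begin

text \<open>Natural numbers are the positive integers {1,2,3,...}; we use type nat and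
  restrict attention to positive values.\<close>

definition fib_set :: "nat set" where
  "fib_set = {fib n | n. n \<ge> 1}"

definition diffseq :: "nat set \<Rightarrow> nat \<Rightarrow> (nat \<Rightarrow> int) \<Rightarrow> bool" where
  "diffseq D k x \<longleftrightarrow> (\<forall>i. 1 \<le> i \<and> i \<le> k - 1 \<longrightarrow> (\<exists>d\<in>D. x (i + 1) - x i = int d))"

definition coloring :: "nat \<Rightarrow> (nat \<Rightarrow> nat) \<Rightarrow> bool" where
  "coloring r \<chi> \<longleftrightarrow> (\<forall>n\<ge>1. \<chi> n \<in> {1..r})"

definition mono_diffseq :: "(nat \<Rightarrow> nat) \<Rightarrow> nat set \<Rightarrow> nat \<Rightarrow> bool" where
  "mono_diffseq \<chi> D k \<longleftrightarrow> (\<exists>x. diffseq D k x \<and>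
      (\<forall>i. 1 \<le> i \<and> i \<le> k \<longrightarrow> x i \<ge> 1) \<and>
      (\<exists>c. \<forall>i. 1 \<le> i \<and> i \<le> k \<longrightarrow> \<chi> (nat (x i)) = c))"

definition accessible :: "nat \<Rightarrow> nat set \<Rightarrow> bool" where
  "accessible r D \<longleftrightarrow> (\<forall>\<chi>. coloring r \<chi> \<longrightarrow> (\<forall>k\<ge>1. mono_diffseq \<chi> D k))"

end

theory Submission
  imports Defs
begin

text \<open>Let \<open>\<theta> = (\<surd>5 - 1) / 2\<close>, so that \<open>F\<^sub>k \<theta> = F\<^sub>k\<^sub>-\<^sub>1 - (-\<theta>)\<^sup>k\<close>. Color \<open>n\<close> by the parity
  of \<open>n\<close> together with the second binary digit of \<open>\<lfloor>n\<theta>\<rfloor>\<close>. If \<open>n\<close> and \<open>n + F\<^sub>k\<close> get the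
  same color, then \<open>F\<^sub>k\<close> is even, so \<open>3 | k\<close>, \<open>F\<^sub>k\<^sub>-\<^sub>1 \<equiv> 1 (mod 4)\<close> and \<open>(-\<theta>)\<^sup>k \<le> \<theta>\<^sup>6\<close>.
  Hence \<open>\<lfloor>n\<theta>\<rfloor>\<close> grows by \<open>F\<^sub>k\<^sub>-\<^sub>1 + d\<close> with \<open>d \<in> {-1, 0, 1}\<close>, and preserving the second
  binary digit leaves two possibilities: either \<open>d = -1\<close> and the fractional part of
  \<open>n\<theta>\<close> wraps around from below \<open>\<theta>\<^sup>6\<close> to above \<open>1 - \<theta>\<^sup>6\<close>, or \<open>d = 0\<close>, \<open>\<lfloor>n\<theta>\<rfloor>\<close> passes
  from even to odd and the fractional part drops by at most \<open>\<theta>\<^sup>6\<close>. As \<open>\<theta>\<^sup>6 < 1/3\<close>,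
  no three such steps can follow each other.\<close>

definition inv_golden_ratio :: real where
  "inv_golden_ratio = (sqrt 5 - 1) / 2"

lemma inv_golden_ratio_sq: "inv_golden_ratio\<^sup>2 = 1 - inv_golden_ratio"
  unfolding inv_golden_ratio_def by (simp add: power2_eq_square field_simps)

lemma sqrt_5_bounds: "13 / 6 < sqrt (5::real)" "sqrt (5::real) < 3"
proof -
  show "13 / 6 < sqrt (5::real)"
    by (rule real_less_rsqrt) (simp add: power2_eq_square)
  show "sqrt (5::real) < 3"
    by (rule real_less_lsqrt) simp_all
qed

lemma inv_golden_ratio_pos: "0 < inv_golden_ratio"
  and inv_golden_ratio_less_1: "inv_golden_ratio < 1"
  using sqrt_5_bounds unfolding inv_golden_ratio_def by auto

lemma inv_golden_ratio_pow_6: "inv_golden_ratio ^ 6 < 1 / 3"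
proof -
  have "inv_golden_ratio ^ 3 = inv_golden_ratio * inv_golden_ratio\<^sup>2"
    by (simp add: power2_eq_square power3_eq_cube)
  also have "\<dots> = inv_golden_ratio * (1 - inv_golden_ratio)"
    by (simp add: inv_golden_ratio_sq)
  also have "\<dots> = inv_golden_ratio - inv_golden_ratio\<^sup>2"
    by (simp add: power2_eq_square algebra_simps)
  finally have cube: "inv_golden_ratio ^ 3 = 2 * inv_golden_ratio - 1"
    by (simp add: inv_golden_ratio_sq)
  have "inv_golden_ratio ^ 6 = (inv_golden_ratio ^ 3)\<^sup>2"
    by (simp flip: power_mult)
  also have "\<dots> = 4 * inv_golden_ratio\<^sup>2 - 4 * inv_golden_ratio + 1"
    by (simp add: cube power2_eq_square algebra_simps)
  also have "\<dots> = 5 - 8 * inv_golden_ratio"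
    by (simp add: inv_golden_ratio_sq)
  moreover have "7 / 12 < inv_golden_ratio"
    using sqrt_5_bounds unfolding inv_golden_ratio_def by (simp add: field_simps)
  ultimately show ?thesis
    by linarith
qed

lemma fib_inv_golden_ratio:
  "real (fib (Suc n)) * inv_golden_ratio = real (fib n) - (- inv_golden_ratio) ^ Suc n"
proof (induction n rule: fib.induct)
  case (3 n)
  have "(- inv_golden_ratio) ^ Suc (Suc (Suc n))
          = (- inv_golden_ratio) ^ Suc n * (1 - inv_golden_ratio)"
    by (simp add: inv_golden_ratio_sq flip: power2_eq_square)
  with 3 show ?case
    by (simp add: algebra_simps)
qed (simp_all add: inv_golden_ratio_sq flip: power2_eq_square)

lemma fib_small: "fib 3 = 2" "fib 4 = 3" "fib 5 = 5" "fib 6 = 8"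
  by (simp_all add: eval_nat_numeral)

lemma fib_mod_4: "fib n mod 4 = fib (n mod 6) mod 4"
proof (induction n rule: less_induct)
  case (less n)
  show ?case
  proof (cases "n < 6")
    case False
    then obtain m where n: "n = m + 6"
      by (metis add.commute le_add_diff_inverse not_less)
    have "fib n = 8 * fib (Suc m) + 5 * fib m"
      using fib_add[of m 5] by (simp add: n fib_small add.commute)
    then have "fib n mod 4 = fib m mod 4"
      by presburger
    moreover have "n mod 6 = m mod 6" and "m < n"
      using n by simp_all
    ultimately show ?thesis
      using less.IH by metis
  qed simp
qed

lemma even_fib_iff: "even (fib n) \<longleftrightarrow> 3 dvd n"
proof -
  have small: "\<forall>r \<in> {0, 1, 2, 3, 4, 5::nat}. even (fib r) \<longleftrightarrow> 3 dvd r"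
    by (simp add: fib_small)
  have "even (fib n) \<longleftrightarrow> even (fib (n mod 6))"
    by (metis fib_mod_4 dvd_mod_iff even_numeral)
  also have "\<dots> \<longleftrightarrow> 3 dvd n mod 6"
    by (rule small[rule_format]) auto
  also have "\<dots> \<longleftrightarrow> 3 dvd n"
    by (simp add: dvd_mod_iff)
  finally show ?thesis .
qed

lemma fib_3_mult_2_mod_4: "fib (3 * j + 2) mod 4 = 1"
proof -
  have "(3 * j + 2) mod 6 = 2 \<or> (3 * j + 2) mod 6 = 5"
    by presburger
  then show ?thesis
    using fib_mod_4[of "3 * j + 2"] fib_small by auto
qed

lemma neg_inv_golden_ratio_pow_bounds:
  assumes "k \<ge> 1" and "even k \<Longrightarrow> k \<ge> 6"
  shows "\<bar>(- inv_golden_ratio) ^ k\<bar> < 1"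
    and "(- inv_golden_ratio) ^ k \<le> inv_golden_ratio ^ 6"
proof -
  have "inv_golden_ratio ^ k \<le> inv_golden_ratio ^ 1"
    using assms(1) inv_golden_ratio_pos inv_golden_ratio_less_1 by (intro power_decreasing) auto
  then show "\<bar>(- inv_golden_ratio) ^ k\<bar> < 1"
    using inv_golden_ratio_pos inv_golden_ratio_less_1 by (simp add: power_abs)
  show "(- inv_golden_ratio) ^ k \<le> inv_golden_ratio ^ 6"
  proof (cases "even k")
    case True
    then have "inv_golden_ratio ^ k \<le> inv_golden_ratio ^ 6"
      using assms(2) inv_golden_ratio_pos inv_golden_ratio_less_1 by (intro power_decreasing) auto
    with True show ?thesis
      by simp
  next
    case False
    have "0 \<le> inv_golden_ratio ^ k" "0 \<le> inv_golden_ratio ^ 6"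
      using inv_golden_ratio_pos by simp_all
    moreover have "(- inv_golden_ratio) ^ k = - (inv_golden_ratio ^ k)"
      using False by simp
    ultimately show ?thesis
      by linarith
  qed
qed

lemma fib_times_inv_golden_ratio:
  assumes "3 dvd k" and "k \<ge> 1"
  obtains q :: int
  where "real (fib k) * inv_golden_ratio = of_int (4 * q + 1) - (- inv_golden_ratio) ^ k"
proof -
  obtain i where "k = 3 * i"
    using assms(1) by blast
  moreover with assms(2) obtain j where "i = Suc j"
    by (cases i) auto
  ultimately have k: "k = Suc (3 * j + 2)"
    by simp
  have "fib (3 * j + 2) mod 4 = 1"
    by (rule fib_3_mult_2_mod_4)
  then have "int (fib (3 * j + 2)) = 4 * int (fib (3 * j + 2) div 4) + 1"
    by presburger
  then have "of_int (4 * int (fib (3 * j + 2) div 4) + 1) = real (fib (3 * j + 2))"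
    by (metis of_int_of_nat_eq)
  moreover have
    "real (fib k) * inv_golden_ratio = real (fib (3 * j + 2)) - (- inv_golden_ratio) ^ k"
    unfolding k by (rule fib_inv_golden_ratio)
  ultimately show thesis
    by (intro that[of "int (fib (3 * j + 2) div 4)"]) simp
qed

lemma floor_frac_shift:
  fixes x e :: real and a :: int
  shows "\<lfloor>x + of_int a + e\<rfloor> = \<lfloor>x\<rfloor> + a + \<lfloor>frac x + e\<rfloor>"
    and "frac (x + of_int a + e) = frac x + e - of_int \<lfloor>frac x + e\<rfloor>"
proof -
  have x: "x + of_int a + e = (frac x + e) + of_int (\<lfloor>x\<rfloor> + a)"
    by (simp add: frac_def)
  show "\<lfloor>x + of_int a + e\<rfloor> = \<lfloor>x\<rfloor> + a + \<lfloor>frac x + e\<rfloor>"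
    unfolding x floor_add_int by simp
  show "frac (x + of_int a + e) = frac x + e - of_int \<lfloor>frac x + e\<rfloor>"
    unfolding x frac_add_of_int_right by (simp add: frac_def)
qed

lemma div_2_mod_2_shift:
  fixes h h' q d :: int
  assumes "h' = h + 4 * q + 1 + d" and "-1 \<le> d" and "d \<le> 1"
    and "h div 2 mod 2 = h' div 2 mod 2"
  shows "d = -1 \<or> (d = 0 \<and> even h \<and> odd h')"
  using assms by presburger

lemma shift_preserving_floor_bit:
  fixes x y e c :: real and q :: int
  assumes shift: "y = x + of_int (4 * q + 1) + e"
    and e: "\<bar>e\<bar> < 1" "- c \<le> e"
    and bit: "\<lfloor>x\<rfloor> div 2 mod 2 = \<lfloor>y\<rfloor> div 2 mod 2"
  shows "(even (\<lfloor>y\<rfloor> - \<lfloor>x\<rfloor>) \<and> frac x < c \<and> 1 - c \<le> frac y) \<or>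
         (even \<lfloor>x\<rfloor> \<and> odd \<lfloor>y\<rfloor> \<and> frac x - c \<le> frac y)"
proof -
  define d where "d = \<lfloor>frac x + e\<rfloor>"
  have floor_y: "\<lfloor>y\<rfloor> = \<lfloor>x\<rfloor> + 4 * q + 1 + d"
    and frac_y: "frac y = frac x + e - of_int d"
    unfolding shift d_def floor_frac_shift by simp_all
  have "-1 \<le> d" "d \<le> 1"
    unfolding d_def using e frac_ge_0[of x] frac_lt_1[of x] by linarith+
  then consider "d = -1" | "d = 0" "even \<lfloor>x\<rfloor>" "odd \<lfloor>y\<rfloor>"
    using div_2_mod_2_shift[OF floor_y] bit by blast
  then show ?thesis
  proof cases
    case 1
    then have "frac x + e < 0"
      unfolding d_def by linarith
    moreover have "even (\<lfloor>y\<rfloor> - \<lfloor>x\<rfloor>)"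
      using floor_y 1 by simp
    moreover have "frac y = frac x + e + 1"
      using frac_y 1 by simp
    ultimately show ?thesis
      using e frac_ge_0[of x] by linarith
  next
    case 2
    then show ?thesis
      using frac_y e by auto
  qed
qed

definition fib_coloring :: "nat \<Rightarrow> nat" where
  "fib_coloring n = 1 + n mod 2 + 2 * nat (\<lfloor>real n * inv_golden_ratio\<rfloor> div 2 mod 2)"

lemma coloring_fib_coloring: "coloring 4 fib_coloring"
  unfolding coloring_def fib_coloring_def by auto

lemma fib_coloring_eq_iff:
  "fib_coloring m = fib_coloring n \<longleftrightarrow>
     m mod 2 = n mod 2 \<and>
     \<lfloor>real m * inv_golden_ratio\<rfloor> div 2 mod 2 = \<lfloor>real n * inv_golden_ratio\<rfloor> div 2 mod 2"
proof -
  have digits: "a + 2 * b = a' + 2 * b' \<longleftrightarrow> a = a' \<and> b = b'"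
    if "a < 2" "a' < 2" for a a' b b' :: nat
    using that by presburger
  have "nat (x div 2 mod 2) = nat (y div 2 mod 2) \<longleftrightarrow> x div 2 mod 2 = y div 2 mod 2"
    for x y :: int
    by (simp add: eq_nat_nat_iff)
  with digits show ?thesis
    unfolding fib_coloring_def by simp
qed

definition fib_step :: "nat \<Rightarrow> nat \<Rightarrow> bool" where
  "fib_step n m \<longleftrightarrow>
     (even (\<lfloor>real m * inv_golden_ratio\<rfloor> - \<lfloor>real n * inv_golden_ratio\<rfloor>) \<and>
      frac (real n * inv_golden_ratio) < inv_golden_ratio ^ 6 \<and>
      1 - inv_golden_ratio ^ 6 \<le> frac (real m * inv_golden_ratio)) \<or>
     (even \<lfloor>real n * inv_golden_ratio\<rfloor> \<and> odd \<lfloor>real m * inv_golden_ratio\<rfloor> \<and>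
      frac (real n * inv_golden_ratio) - inv_golden_ratio ^ 6 \<le> frac (real m * inv_golden_ratio))"

lemma fib_step_if_same_color:
  assumes "k \<ge> 1" and "fib_coloring (n + fib k) = fib_coloring n"
  shows "fib_step n (n + fib k)"
proof -
  have "(n + fib k) mod 2 = n mod 2"
    and bit: "\<lfloor>real n * inv_golden_ratio\<rfloor> div 2 mod 2
              = \<lfloor>real (n + fib k) * inv_golden_ratio\<rfloor> div 2 mod 2"
    using assms(2) unfolding fib_coloring_eq_iff by auto
  then have "3 dvd k"
    unfolding even_fib_iff[symmetric] by presburger
  then obtain q
    where q: "real (fib k) * inv_golden_ratio = of_int (4 * q + 1) - (- inv_golden_ratio) ^ k"
    using assms(1) fib_times_inv_golden_ratio by metis
  have "even k \<Longrightarrow> k \<ge> 6"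
    using \<open>3 dvd k\<close> assms(1) by presburger
  then have "\<bar>- ((- inv_golden_ratio) ^ k)\<bar> < 1"
    and "- (inv_golden_ratio ^ 6) \<le> - ((- inv_golden_ratio) ^ k)"
    using neg_inv_golden_ratio_pow_bounds[OF assms(1)] by auto
  moreover have "real (n + fib k) * inv_golden_ratio
      = real n * inv_golden_ratio + of_int (4 * q + 1) + - ((- inv_golden_ratio) ^ k)"
    using q by (simp add: algebra_simps)
  ultimately show ?thesis
    unfolding fib_step_def using shift_preserving_floor_bit bit by blast
qed

lemma no_three_fib_steps:
  assumes "fib_step a b" and "fib_step b c" and "fib_step c d"
  shows False
  using assms inv_golden_ratio_pow_6 unfolding fib_step_def by auto

lemma monochromatic_fib_diffseq_step:
  assumes "diffseq fib_set k x"
    and "\<forall>i. 1 \<le> i \<and> i \<le> k \<longrightarrow> x i \<ge> 1"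
    and "\<forall>i. 1 \<le> i \<and> i \<le> k \<longrightarrow> fib_coloring (nat (x i)) = c"
    and "1 \<le> i" and "i < k"
  shows "fib_step (nat (x i)) (nat (x (i + 1)))"
proof -
  obtain j where "j \<ge> 1" and j: "x (i + 1) - x i = int (fib j)"
    using assms(1,4,5) unfolding diffseq_def fib_set_def by fastforce
  moreover have "nat (x (i + 1)) = nat (x i) + fib j"
  proof -
    have "x i \<ge> 1"
      using assms(2,4,5) by simp
    then show ?thesis
      using j by (simp add: eq_diff_eq nat_add_distrib)
  qed
  moreover have "fib_coloring (nat (x (i + 1))) = fib_coloring (nat (x i))"
    using assms(3,4,5) by simp
  ultimately show ?thesis
    using fib_step_if_same_color by metis
qed

theorem mainTheorem9:
  shows "(\<exists>\<chi>. coloring 4 \<chi> \<and> \<not> mono_diffseq \<chi> fib_set 4) \<and> \<not> accessible 4 fib_set"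
proof -
  have "\<not> mono_diffseq fib_coloring fib_set 4"
  proof
    assume "mono_diffseq fib_coloring fib_set 4"
    then obtain x c where "diffseq fib_set 4 x"
      and "\<forall>i. 1 \<le> i \<and> i \<le> 4 \<longrightarrow> x i \<ge> 1"
      and "\<forall>i. 1 \<le> i \<and> i \<le> 4 \<longrightarrow> fib_coloring (nat (x i)) = c"
      unfolding mono_diffseq_def by blast
    then have "fib_step (nat (x i)) (nat (x (i + 1)))" if "1 \<le> i" "i < 4" for i
      using that monochromatic_fib_diffseq_step[of 4 x c i] by blast
    from this[of 1] this[of 2] this[of 3] show False
      using no_three_fib_steps[of "nat (x 1)" "nat (x 2)" "nat (x 3)" "nat (x 4)"]
      by (simp add: eval_nat_numeral)
  qed
  with coloring_fib_coloring show ?thesis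
    unfolding accessible_def by (metis one_le_numeral)
qed

end
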